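(* Let $(X,\le)$ be a poset and $E$ an equivalence relation on $X$ with ${\le}\subseteq E$; let $\alpha:X\to X$ be an order automorphism and $\beta:X\to X$ a self-inverse dual order automorphism of $(X,\le)$ with $\alpha,\beta\subseteq E$ and $\beta=\alpha\circ\beta\circ\alpha$, and let $\mathbf A=\mathbf{Dq}(\mathbf E)=\langle\mathsf{Up}(\mathbf E),\cap,\cup,\circ,{\le},0,{\sim},-,'\rangle$ with $0=\alpha\circ({\le}^c)^\smile$ and $R'=\alpha\circ\beta\circ R^c\circ\beta$. Let $n\in\omega$, and for $R\in\mathsf{Up}(\mathbf E)$ let $R^{\triangledown n}={\sim}^{2n}(R')$ and $R^{\vartriangle n}=-^{2n}(R')$. Then there are self-inverse dual order automorphisms $\beta_{\triangledown n}$ and $\beta_{\vartriangle n}$ of $(X,\le)$ such that (i) $\beta_{\triangledown n},\beta_{\vartriangle n}\subseteq E$; (ii) $\beta_{\triangledown n}=\alpha\circ\beta_{\triangledown n}\circ\alpha$ and $\beta_{\vartriangle n}=\alpha\circ\beta_{\vartriangle n}\circ\alpha$; (iii) for all $R\in\mathsf{Up}(\mathbf E)$, $R^{\triangledown n}=\alpha\circ\beta_{\triangledown n}\circ R^c\circ\beta_{\triangledown n}$ and $R^{\vartriangle n}=\alpha\circ\beta_{\vartriangle n}\circ R^c\circ\beta_{\vartriangle n}$.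
   Context: For binary relations: converse $R^\smile=\{(x,y)\mid(y,x)\in R\}$; composition $R\circ S=\{(x,y)\mid\exists z\,((x,z)\in R,(z,y)\in S)\}$. Functions are identified with their graphs. For a poset $(X,\le)$ and an equivalence relation $E\supseteq{\le}$, $E$ is partially ordered by $(u,v)\preceq(x,y)$ iff $x\le u$ and $v\le y$; $\mathbf E=(E,\preceq)$, $\mathsf{Up}(\mathbf E)$ its up-sets. For $R\subseteq E$, $R^c=E\setminus R$. On $\mathsf{Up}(\mathbf E)$: ${\sim}R=(R^\smile\circ 0^c)^c$ and $-R=(0^c\circ R^\smile)^c$; ${\sim}^k,-^k$ are $k$-fold applications. Order automorphism: bijection with $x\le y\iff\alpha(x)\le\alpha(y)$; dual order automorphism: bijection with $x\le y\iff\beta(y)\le\beta(x)$; self-inverse: $\beta\circ\beta=\mathrm{id}_X$. *)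

theory Defs
  imports Main
begin

text \<open>Graph of a function on the carrier X (functions are identified with their graphs).
  Composition R \<circ> S of the paper is Isabelle's relational composition R O S,
  converse is r\<inverse>.\<close>
definition graph_on :: "'a set \<Rightarrow> ('a \<Rightarrow> 'a) \<Rightarrow> 'a rel" where
  "graph_on X f = {(x, f x) | x. x \<in> X}"

definition poset_on :: "'a set \<Rightarrow> 'a rel \<Rightarrow> bool" where
  "poset_on X le \<longleftrightarrow> le \<subseteq> X \<times> X \<and> refl_on X le \<and> antisym le \<and> trans le"

definition order_automorphism :: "'a set \<Rightarrow> 'a rel \<Rightarrow> ('a \<Rightarrow> 'a) \<Rightarrow> bool" where
  "order_automorphism X le a \<longleftrightarrow> bij_betw a X X \<and>
     (\<forall>x\<in>X. \<forall>y\<in>X. (x, y) \<in> le \<longleftrightarrow> (a x, a y) \<in> le)"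

definition dual_order_automorphism :: "'a set \<Rightarrow> 'a rel \<Rightarrow> ('a \<Rightarrow> 'a) \<Rightarrow> bool" where
  "dual_order_automorphism X le b \<longleftrightarrow> bij_betw b X X \<and>
     (\<forall>x\<in>X. \<forall>y\<in>X. (x, y) \<in> le \<longleftrightarrow> (b y, b x) \<in> le)"

definition self_inverse :: "'a set \<Rightarrow> ('a \<Rightarrow> 'a) \<Rightarrow> bool" where
  "self_inverse X b \<longleftrightarrow> graph_on X b O graph_on X b = Id_on X"

text \<open>Up-sets of (E, \<preceq>) where (u,v) \<preceq> (x,y) iff x \<le> u and v \<le> y.\<close>
definition Up :: "'a rel \<Rightarrow> 'a rel \<Rightarrow> 'a rel set" where
  "Up le E = {R. R \<subseteq> E \<and> (\<forall>u v x y. (u, v) \<in> R \<and> (x, y) \<in> E \<and> (x, u) \<in> le \<and> (v, y) \<in> le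
                  \<longrightarrow> (x, y) \<in> R)}"

definition compl_E :: "'a rel \<Rightarrow> 'a rel \<Rightarrow> 'a rel" where
  "compl_E E R = E - R"

definition zero_rel :: "'a set \<Rightarrow> 'a rel \<Rightarrow> 'a rel \<Rightarrow> ('a \<Rightarrow> 'a) \<Rightarrow> 'a rel" where
  "zero_rel X le E a = graph_on X a O (compl_E E le)\<inverse>"

definition tneg :: "'a set \<Rightarrow> 'a rel \<Rightarrow> 'a rel \<Rightarrow> ('a \<Rightarrow> 'a) \<Rightarrow> 'a rel \<Rightarrow> 'a rel" where
  "tneg X le E a R = compl_E E (R\<inverse> O compl_E E (zero_rel X le E a))"

definition mneg :: "'a set \<Rightarrow> 'a rel \<Rightarrow> 'a rel \<Rightarrow> ('a \<Rightarrow> 'a) \<Rightarrow> 'a rel \<Rightarrow> 'a rel" where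
  "mneg X le E a R = compl_E E (compl_E E (zero_rel X le E a) O R\<inverse>)"

definition prime_op :: "'a set \<Rightarrow> 'a rel \<Rightarrow> ('a \<Rightarrow> 'a) \<Rightarrow> ('a \<Rightarrow> 'a) \<Rightarrow> 'a rel \<Rightarrow> 'a rel" where
  "prime_op X E a b R = graph_on X a O graph_on X b O compl_E E R O graph_on X b"

end

theory Submission
  imports Defs
begin

text \<open>On up-sets of \<open>E\<close>, the double negations are pullbacks:
  \<open>\<sim>\<sim>R = {(x, y) \<in> E. (\<alpha>\<inverse> x, \<alpha>\<inverse> y) \<in> R}\<close> and \<open>--R = {(x, y) \<in> E. (\<alpha> x, \<alpha> y) \<in> R}\<close>,
  so \<open>\<sim>\<^sup>2\<^sup>n\<close> and \<open>-\<^sup>2\<^sup>n\<close> pull back along \<open>\<alpha>\<^sup>-\<^sup>n\<close> and \<open>\<alpha>\<^sup>n\<close>. Pulling back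
  \<open>R' = \<alpha> \<circ> \<beta> \<circ> R\<^sup>c \<circ> \<beta>\<close> along a map \<open>g\<close> replaces \<open>\<beta>\<close> by \<open>\<beta> \<circ> g\<close>, and
  \<open>\<beta> = \<alpha> \<circ> \<beta> \<circ> \<alpha>\<close>, i.e. \<open>\<beta> \<alpha> = \<alpha>\<inverse> \<beta>\<close>, makes \<open>\<beta> \<alpha>\<^sup>-\<^sup>n\<close> and \<open>\<beta> \<alpha>\<^sup>n\<close> again
  self-inverse dual order automorphisms of the same kind.\<close>

lemma graph_on_iff [simp]: "(x, y) \<in> graph_on X f \<longleftrightarrow> x \<in> X \<and> y = f x"
  unfolding graph_on_def by auto

lemma graph_on_subset_iff: "graph_on X f \<subseteq> R \<longleftrightarrow> (\<forall>x\<in>X. (x, f x) \<in> R)"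
  by auto

lemma graph_on_eq_iff: "graph_on X f = graph_on X g \<longleftrightarrow> (\<forall>x\<in>X. f x = g x)"
  by (auto simp: set_eq_iff)

lemma graph_on_relcomp: "f ` X \<subseteq> X \<Longrightarrow> graph_on X f O graph_on X g = graph_on X (g \<circ> f)"
  by (auto simp: image_subset_iff intro!: relcompI)

lemma self_inverse_iff: "f ` X \<subseteq> X \<Longrightarrow> self_inverse X f \<longleftrightarrow> (\<forall>x\<in>X. f (f x) = x)"
  unfolding self_inverse_def graph_on_relcomp Id_on_def by (auto simp: set_eq_iff)

lemma order_automorphism_funpow:
  assumes "order_automorphism X le f"
  shows "order_automorphism X le (f ^^ n)"
proof -
  have f: "bij_betw f X X" "\<And>x y. x \<in> X \<Longrightarrow> y \<in> X \<Longrightarrow> (x, y) \<in> le \<longleftrightarrow> (f x, f y) \<in> le"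
    using assms unfolding order_automorphism_def by auto
  have fn: "bij_betw (f ^^ n) X X"
    using bij_betw_funpow[OF f(1)] .
  have "(x, y) \<in> le \<longleftrightarrow> ((f ^^ n) x, (f ^^ n) y) \<in> le" if "x \<in> X" "y \<in> X" for x y
    using that by (induction n) (simp_all add: f(2) bij_betw_apply[OF bij_betw_funpow[OF f(1)]])
  then show ?thesis
    using fn unfolding order_automorphism_def by blast
qed

lemma order_automorphism_inv_into:
  assumes "order_automorphism X le f"
  shows "order_automorphism X le (inv_into X f)"
proof -
  have f: "bij_betw f X X" "\<And>x y. x \<in> X \<Longrightarrow> y \<in> X \<Longrightarrow> (x, y) \<in> le \<longleftrightarrow> (f x, f y) \<in> le"
    using assms unfolding order_automorphism_def by auto
  have "(x, y) \<in> le \<longleftrightarrow> (inv_into X f x, inv_into X f y) \<in> le" if "x \<in> X" "y \<in> X" for x y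
    using f(2)[OF bij_betw_apply[OF bij_betw_inv_into[OF f(1)]] bij_betw_apply[OF bij_betw_inv_into[OF f(1)]]]
      bij_betw_inv_into_right[OF f(1)] that
    by metis
  then show ?thesis
    using bij_betw_inv_into[OF f(1)] unfolding order_automorphism_def by blast
qed

lemma dual_order_automorphism_comp:
  assumes f: "dual_order_automorphism X le f" and g: "order_automorphism X le g"
  shows "dual_order_automorphism X le (f \<circ> g)"
proof -
  have bij: "bij_betw f X X" "bij_betw g X X"
    using f g unfolding order_automorphism_def dual_order_automorphism_def by auto
  have "(x, y) \<in> le \<longleftrightarrow> (f (g y), f (g x)) \<in> le" if "x \<in> X" "y \<in> X" for x y
  proof -
    have "(x, y) \<in> le \<longleftrightarrow> (g x, g y) \<in> le"
      using g that unfolding order_automorphism_def by blast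
    also have "\<dots> \<longleftrightarrow> (f (g y), f (g x)) \<in> le"
      using f that bij_betw_apply[OF bij(2)] unfolding dual_order_automorphism_def by blast
    finally show ?thesis .
  qed
  then show ?thesis
    using bij_betw_trans[OF bij(2,1)] unfolding dual_order_automorphism_def comp_def by blast
qed

locale Dq_frame =
  fixes X :: "'a set" and le E :: "'a rel" and \<alpha> :: "'a \<Rightarrow> 'a"
  assumes poset: "poset_on X le"
    and equiv: "equiv X E"
    and alpha: "order_automorphism X le \<alpha>"
    and alpha_E: "graph_on X \<alpha> \<subseteq> E"
begin

abbreviation \<alpha>inv :: "'a \<Rightarrow> 'a" where "\<alpha>inv \<equiv> inv_into X \<alpha>"

lemma E_in_X: "(x, y) \<in> E \<Longrightarrow> x \<in> X \<and> y \<in> X"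
  using equiv_type[OF equiv] by blast

lemma E_sym: "(x, y) \<in> E \<Longrightarrow> (y, x) \<in> E"
  using equiv unfolding equiv_def by (blast dest: symD)

lemma E_trans: "(x, y) \<in> E \<Longrightarrow> (y, z) \<in> E \<Longrightarrow> (x, z) \<in> E"
  using equiv unfolding equiv_def by (blast dest: transD)

lemma E_refl: "x \<in> X \<Longrightarrow> (x, x) \<in> E"
  using equiv unfolding equiv_def by (blast dest: refl_onD)

lemma le_refl: "x \<in> X \<Longrightarrow> (x, x) \<in> le"
  using poset unfolding poset_on_def by (blast dest: refl_onD)

lemma le_in_X: "(x, y) \<in> le \<Longrightarrow> x \<in> X \<and> y \<in> X"
  using poset unfolding poset_on_def by blast

lemma order_automorphism_mono:
  "order_automorphism X le g \<Longrightarrow> (x, y) \<in> le \<Longrightarrow> (g x, g y) \<in> le"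
  using le_in_X unfolding order_automorphism_def by blast

lemma graph_on_E_apply: "graph_on X g \<subseteq> E \<Longrightarrow> x \<in> X \<Longrightarrow> g x \<in> X \<and> (x, g x) \<in> E"
  using E_in_X by (metis graph_on_iff subsetD)

lemma graph_on_E_cong: "graph_on X g \<subseteq> E \<Longrightarrow> (x, y) \<in> E \<Longrightarrow> (g x, g y) \<in> E"
  by (meson E_in_X E_sym E_trans graph_on_E_apply)

lemma graph_on_E_left_iff: "graph_on X g \<subseteq> E \<Longrightarrow> x \<in> X \<Longrightarrow> (g x, y) \<in> E \<longleftrightarrow> (x, y) \<in> E"
  by (metis E_sym E_trans graph_on_E_apply)

lemma graph_on_E_right_iff: "graph_on X g \<subseteq> E \<Longrightarrow> y \<in> X \<Longrightarrow> (x, g y) \<in> E \<longleftrightarrow> (x, y) \<in> E"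
  by (metis E_sym E_trans graph_on_E_apply)

lemma graph_on_funpow_E:
  assumes g: "graph_on X g \<subseteq> E"
  shows "graph_on X (g ^^ n) \<subseteq> E"
proof (induction n)
  case 0
  then show ?case
    using E_refl by auto
next
  case (Suc n)
  have "(x, g ((g ^^ n) x)) \<in> E" if "x \<in> X" for x
    using graph_on_E_apply[OF Suc that] graph_on_E_apply[OF g] E_trans by blast
  then show ?case
    by auto
qed

lemma alpha_bij: "bij_betw \<alpha> X X"
  using alpha unfolding order_automorphism_def by auto

lemma alpha_in: "x \<in> X \<Longrightarrow> \<alpha> x \<in> X"
  using bij_betw_apply[OF alpha_bij] .

lemma alpha_le_iff: "x \<in> X \<Longrightarrow> y \<in> X \<Longrightarrow> (\<alpha> x, \<alpha> y) \<in> le \<longleftrightarrow> (x, y) \<in> le"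
  using alpha unfolding order_automorphism_def by auto

lemma alpha_E_apply: "x \<in> X \<Longrightarrow> (x, \<alpha> x) \<in> E"
  using alpha_E by auto

lemma alpha_inv: "order_automorphism X le \<alpha>inv"
  using order_automorphism_inv_into[OF alpha] .

lemma alpha_inv_in: "x \<in> X \<Longrightarrow> \<alpha>inv x \<in> X"
  using alpha_inv unfolding order_automorphism_def by (auto dest: bij_betw_apply)

lemma alpha_alpha_inv [simp]: "x \<in> X \<Longrightarrow> \<alpha> (\<alpha>inv x) = x"
  using bij_betw_inv_into_right[OF alpha_bij] .

lemma alpha_inv_alpha [simp]: "x \<in> X \<Longrightarrow> \<alpha>inv (\<alpha> x) = x"
  using bij_betw_inv_into_left[OF alpha_bij] .

lemma alpha_inv_E: "graph_on X \<alpha>inv \<subseteq> E"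
  using alpha_E_apply[OF alpha_inv_in] by (auto intro: E_sym)

lemma UpD:
  "R \<in> Up le E \<Longrightarrow> (u, v) \<in> R \<Longrightarrow> (x, y) \<in> E \<Longrightarrow> (x, u) \<in> le \<Longrightarrow> (v, y) \<in> le \<Longrightarrow> (x, y) \<in> R"
  unfolding Up_def by blast

lemma UpI:
  assumes "R \<subseteq> E"
    and "\<And>u v x y. (u, v) \<in> R \<Longrightarrow> (x, y) \<in> E \<Longrightarrow> (x, u) \<in> le \<Longrightarrow> (v, y) \<in> le \<Longrightarrow> (x, y) \<in> R"
  shows "R \<in> Up le E"
  using assms unfolding Up_def by blast

lemma Up_subset: "R \<in> Up le E \<Longrightarrow> R \<subseteq> E"
  unfolding Up_def by blast

text \<open>\<open>E \<inter> inv_image R g\<close> is the pullback of \<open>R\<close> along \<open>g\<close>, the relation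
  \<open>g \<circ> R \<circ> g\<inverse>\<close> in the paper's notation when \<open>g\<close> is a bijection.\<close>

lemma pullback_Up:
  assumes R: "R \<in> Up le E" and g: "graph_on X g \<subseteq> E"
    and mono: "\<And>x y. (x, y) \<in> le \<Longrightarrow> (g x, g y) \<in> le"
  shows "E \<inter> inv_image R g \<in> Up le E"
proof (rule UpI)
  fix u v x y
  assume "(u, v) \<in> E \<inter> inv_image R g" and xy: "(x, y) \<in> E" "(x, u) \<in> le" "(v, y) \<in> le"
  then have "(g u, g v) \<in> R" "(g x, g y) \<in> E" "(g x, g u) \<in> le" "(g v, g y) \<in> le"
    using graph_on_E_cong[OF g] mono by auto
  then show "(x, y) \<in> E \<inter> inv_image R g"
    using UpD[OF R] xy(1) by auto
qed auto

lemma pullback_pullback: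
  "graph_on X g \<subseteq> E \<Longrightarrow> E \<inter> inv_image (E \<inter> inv_image R h) g = E \<inter> inv_image R (h \<circ> g)"
  by (auto simp: graph_on_E_cong)

lemma funpow_pullback:
  assumes N: "\<And>S. S \<in> Up le E \<Longrightarrow> N S = E \<inter> inv_image S g"
    and g: "order_automorphism X le g" "graph_on X g \<subseteq> E" and R: "R \<in> Up le E"
  shows "(N ^^ n) R = E \<inter> inv_image R (g ^^ n)"
proof (induction n)
  case 0
  then show ?case using Up_subset[OF R] by auto
next
  case (Suc n)
  have gn: "order_automorphism X le (g ^^ n)" "graph_on X (g ^^ n) \<subseteq> E"
    using order_automorphism_funpow[OF g(1)] graph_on_funpow_E[OF g(2)] by auto
  have "E \<inter> inv_image R (g ^^ n) \<in> Up le E"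
    using pullback_Up[OF R gn(2) order_automorphism_mono[OF gn(1)]] .
  then have "(N ^^ Suc n) R = E \<inter> inv_image (E \<inter> inv_image R (g ^^ n)) g"
    using Suc N by simp
  also have "\<dots> = E \<inter> inv_image R (g ^^ Suc n)"
    by (simp add: pullback_pullback[OF g(2)] funpow_Suc_right del: funpow.simps)
  finally show ?case .
qed

lemma compl_zero_rel: "compl_E E (zero_rel X le E \<alpha>) = {(x, y) \<in> E. (y, \<alpha> x) \<in> le}"
proof -
  have "(x, y) \<in> graph_on X \<alpha> O (E - le)\<inverse> \<longleftrightarrow> (y, \<alpha> x) \<notin> le" if "(x, y) \<in> E" for x y
  proof -
    have "(y, \<alpha> x) \<in> E"
      using E_sym[OF that] E_in_X[OF that] graph_on_E_right_iff[OF alpha_E] by simp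
    then show ?thesis
      using E_in_X[OF that] by (auto intro!: relcompI[of x "\<alpha> x"])
  qed
  then show ?thesis
    unfolding compl_E_def zero_rel_def by auto
qed

lemma tneg_Up_eq:
  assumes R: "R \<in> Up le E"
  shows "tneg X le E \<alpha> R = {(x, y) \<in> E. (\<alpha>inv y, x) \<notin> R}"
proof -
  have "(\<exists>z. (z, x) \<in> R \<and> (z, y) \<in> E \<and> (y, \<alpha> z) \<in> le) \<longleftrightarrow> (\<alpha>inv y, x) \<in> R"
    if xy: "(x, y) \<in> E" for x y
  proof
    assume "\<exists>z. (z, x) \<in> R \<and> (z, y) \<in> E \<and> (y, \<alpha> z) \<in> le"
    then obtain z where z: "(z, x) \<in> R" "(z, y) \<in> E" "(y, \<alpha> z) \<in> le"
      by blast
    have X: "x \<in> X" "y \<in> X" "z \<in> X"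
      using xy z(2) E_in_X by auto
    have "(\<alpha>inv y, z) \<in> le"
      using z(3) alpha_le_iff[OF alpha_inv_in[OF X(2)] X(3)] X(2) by simp
    moreover have "(\<alpha>inv y, x) \<in> E"
      using E_sym[OF xy] X graph_on_E_left_iff[OF alpha_inv_E] by simp
    ultimately show "(\<alpha>inv y, x) \<in> R"
      using UpD[OF R z(1)] le_refl X by blast
  next
    assume "(\<alpha>inv y, x) \<in> R"
    moreover have "y \<in> X"
      using xy E_in_X by auto
    ultimately show "\<exists>z. (z, x) \<in> R \<and> (z, y) \<in> E \<and> (y, \<alpha> z) \<in> le"
      by (intro exI[of _ "\<alpha>inv y"]) (simp add: le_refl E_refl graph_on_E_left_iff[OF alpha_inv_E])
  qed
  then show ?thesis
    unfolding tneg_def compl_zero_rel unfolding compl_E_def by auto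
qed

lemma mneg_Up_eq:
  assumes R: "R \<in> Up le E"
  shows "mneg X le E \<alpha> R = {(x, y) \<in> E. (y, \<alpha> x) \<notin> R}"
proof -
  have "(\<exists>z. (x, z) \<in> E \<and> (z, \<alpha> x) \<in> le \<and> (y, z) \<in> R) \<longleftrightarrow> (y, \<alpha> x) \<in> R"
    if xy: "(x, y) \<in> E" for x y
  proof
    assume "\<exists>z. (x, z) \<in> E \<and> (z, \<alpha> x) \<in> le \<and> (y, z) \<in> R"
    then obtain z where z: "(x, z) \<in> E" "(z, \<alpha> x) \<in> le" "(y, z) \<in> R"
      by blast
    have X: "x \<in> X" "y \<in> X"
      using xy E_in_X by auto
    have "(y, \<alpha> x) \<in> E"
      using E_sym[OF xy] X graph_on_E_right_iff[OF alpha_E] by simp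
    then show "(y, \<alpha> x) \<in> R"
      using UpD[OF R z(3)] le_refl X z(2) by blast
  next
    assume "(y, \<alpha> x) \<in> R"
    moreover have "x \<in> X"
      using xy E_in_X by auto
    ultimately show "\<exists>z. (x, z) \<in> E \<and> (z, \<alpha> x) \<in> le \<and> (y, z) \<in> R"
      by (intro exI[of _ "\<alpha> x"]) (auto simp: le_refl alpha_E_apply alpha_in)
  qed
  then show ?thesis
    unfolding mneg_def compl_zero_rel unfolding compl_E_def by auto
qed

lemma tneg_Up:
  assumes R: "R \<in> Up le E"
  shows "tneg X le E \<alpha> R \<in> Up le E"
  unfolding tneg_Up_eq[OF R]
proof (rule UpI)
  fix u v x y
  assume uv: "(u, v) \<in> {(x, y) \<in> E. (\<alpha>inv y, x) \<notin> R}"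
    and xy: "(x, y) \<in> E" "(x, u) \<in> le" "(v, y) \<in> le"
  have uv: "(u, v) \<in> E" "(\<alpha>inv v, u) \<notin> R"
    using uv by auto
  have X: "v \<in> X" "y \<in> X"
    using uv(1) xy(1) E_in_X by auto
  have "(\<alpha>inv v, \<alpha>inv y) \<in> le"
    using xy(3) X alpha_le_iff[OF alpha_inv_in alpha_inv_in] by simp
  moreover have "(\<alpha>inv v, u) \<in> E"
    using E_sym[OF uv(1)] X(1) graph_on_E_left_iff[OF alpha_inv_E] by simp
  ultimately have "(\<alpha>inv y, x) \<in> R \<Longrightarrow> (\<alpha>inv v, u) \<in> R"
    using UpD[OF R] xy(2) by blast
  then show "(x, y) \<in> {(x, y) \<in> E. (\<alpha>inv y, x) \<notin> R}"
    using uv xy(1) by blast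
qed auto

lemma mneg_Up:
  assumes R: "R \<in> Up le E"
  shows "mneg X le E \<alpha> R \<in> Up le E"
  unfolding mneg_Up_eq[OF R]
proof (rule UpI)
  fix u v x y
  assume uv: "(u, v) \<in> {(x, y) \<in> E. (y, \<alpha> x) \<notin> R}"
    and xy: "(x, y) \<in> E" "(x, u) \<in> le" "(v, y) \<in> le"
  have uv: "(u, v) \<in> E" "(v, \<alpha> u) \<notin> R"
    using uv by auto
  have X: "u \<in> X" "x \<in> X"
    using uv xy E_in_X by auto
  have "(\<alpha> x, \<alpha> u) \<in> le"
    using xy(2) X alpha_le_iff by simp
  moreover have "(v, \<alpha> u) \<in> E"
    using E_sym[OF uv(1)] X(1) graph_on_E_right_iff[OF alpha_E] by simp
  ultimately have "(y, \<alpha> x) \<in> R \<Longrightarrow> (v, \<alpha> u) \<in> R"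
    using UpD[OF R] xy(3) by blast
  then show "(x, y) \<in> {(x, y) \<in> E. (y, \<alpha> x) \<notin> R}"
    using uv xy(1) by blast
qed auto

lemma tneg_tneg:
  assumes R: "R \<in> Up le E"
  shows "tneg X le E \<alpha> (tneg X le E \<alpha> R) = E \<inter> inv_image R \<alpha>inv"
proof -
  have "(\<alpha>inv y, x) \<in> E" if "(x, y) \<in> E" for x y
    using E_sym[OF that] E_in_X[OF that] graph_on_E_left_iff[OF alpha_inv_E] by simp
  then have "(x, y) \<in> tneg X le E \<alpha> (tneg X le E \<alpha> R) \<longleftrightarrow> (x, y) \<in> E \<inter> inv_image R \<alpha>inv"
    for x y
    by (subst tneg_Up_eq[OF tneg_Up[OF R]]) (auto simp: tneg_Up_eq[OF R])
  then show ?thesis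
    by auto
qed

lemma mneg_mneg:
  assumes R: "R \<in> Up le E"
  shows "mneg X le E \<alpha> (mneg X le E \<alpha> R) = E \<inter> inv_image R \<alpha>"
proof -
  have "(y, \<alpha> x) \<in> E" if "(x, y) \<in> E" for x y
    using E_sym[OF that] E_in_X[OF that] graph_on_E_right_iff[OF alpha_E] by simp
  then have "(x, y) \<in> mneg X le E \<alpha> (mneg X le E \<alpha> R) \<longleftrightarrow> (x, y) \<in> E \<inter> inv_image R \<alpha>"
    for x y
    by (subst mneg_Up_eq[OF mneg_Up[OF R]]) (auto simp: mneg_Up_eq[OF R])
  then show ?thesis
    by auto
qed

lemma funpow_tneg:
  "R \<in> Up le E \<Longrightarrow> (tneg X le E \<alpha> ^^ (2 * n)) R = E \<inter> inv_image R (\<alpha>inv ^^ n)"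
  unfolding funpow_mult[symmetric]
  by (rule funpow_pullback) (simp_all add: numeral_2_eq_2 tneg_tneg alpha_inv alpha_inv_E)

lemma funpow_mneg:
  "R \<in> Up le E \<Longrightarrow> (mneg X le E \<alpha> ^^ (2 * n)) R = E \<inter> inv_image R (\<alpha> ^^ n)"
  unfolding funpow_mult[symmetric]
  by (rule funpow_pullback) (simp_all add: numeral_2_eq_2 mneg_mneg alpha alpha_E)

definition compatible_involution :: "('a \<Rightarrow> 'a) \<Rightarrow> bool" where
  "compatible_involution f \<longleftrightarrow> dual_order_automorphism X le f \<and> self_inverse X f \<and>
     graph_on X f \<subseteq> E \<and> graph_on X f = graph_on X \<alpha> O graph_on X f O graph_on X \<alpha>"

lemma compatible_involution_iff:
  "compatible_involution f \<longleftrightarrow> dual_order_automorphism X le f \<and>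
     (\<forall>x\<in>X. f (f x) = x \<and> (x, f x) \<in> E \<and> f x = \<alpha> (f (\<alpha> x)))"
proof (cases "dual_order_automorphism X le f")
  case True
  then have f: "f ` X \<subseteq> X"
    unfolding dual_order_automorphism_def bij_betw_def by simp
  have "graph_on X \<alpha> O graph_on X f O graph_on X \<alpha> = graph_on X (\<alpha> \<circ> f \<circ> \<alpha>)"
    using alpha_in by (simp add: graph_on_relcomp[OF f] graph_on_relcomp image_subset_iff)
  then show ?thesis
    using True
    by (auto simp: compatible_involution_def self_inverse_iff[OF f] graph_on_subset_iff graph_on_eq_iff)
qed (simp add: compatible_involution_def)

lemma compatible_involutionD:
  assumes "compatible_involution f" and x: "x \<in> X"
  shows "f x \<in> X" "f (f x) = x" "(x, f x) \<in> E" "f x = \<alpha> (f (\<alpha> x))"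
  using assms unfolding compatible_involution_iff dual_order_automorphism_def
  by (auto dest: bij_betw_apply)

lemma compatible_involution_alpha:
  assumes f: "compatible_involution f" and x: "x \<in> X"
  shows "f (\<alpha> x) = \<alpha>inv (f x)"
  using compatible_involutionD(4)[OF f x] compatible_involutionD(1)[OF f alpha_in[OF x]] by simp

lemma compatible_involution_alpha_inv:
  assumes f: "compatible_involution f" and x: "x \<in> X"
  shows "f (\<alpha>inv x) = \<alpha> (f x)"
  using compatible_involutionD(4)[OF f alpha_inv_in[OF x]] x by simp

lemma compatible_involution_comp_alpha:
  assumes f: "compatible_involution f"
  shows "compatible_involution (f \<circ> \<alpha>)"
  unfolding compatible_involution_iff
proof (intro conjI ballI)
  show "dual_order_automorphism X le (f \<circ> \<alpha>)"
    using f alpha unfolding compatible_involution_def by (blast intro: dual_order_automorphism_comp)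
  fix x
  assume x: "x \<in> X"
  note fD = compatible_involutionD[OF f]
  show "(f \<circ> \<alpha>) ((f \<circ> \<alpha>) x) = x"
    using compatible_involution_alpha[OF f fD(1)] fD(2) x by (simp add: alpha_in)
  show "(x, (f \<circ> \<alpha>) x) \<in> E"
    using E_trans[OF alpha_E_apply fD(3)] x alpha_in by simp
  show "(f \<circ> \<alpha>) x = \<alpha> ((f \<circ> \<alpha>) (\<alpha> x))"
    using fD(4) x alpha_in by simp
qed

lemma compatible_involution_comp_alpha_inv:
  assumes f: "compatible_involution f"
  shows "compatible_involution (f \<circ> \<alpha>inv)"
  unfolding compatible_involution_iff
proof (intro conjI ballI)
  show "dual_order_automorphism X le (f \<circ> \<alpha>inv)"
    using f alpha_inv unfolding compatible_involution_def by (blast intro: dual_order_automorphism_comp)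
  fix x
  assume x: "x \<in> X"
  note fD = compatible_involutionD[OF f]
  show "(f \<circ> \<alpha>inv) ((f \<circ> \<alpha>inv) x) = x"
    using compatible_involution_alpha_inv[OF f fD(1)] fD(2) x by (simp add: alpha_inv_in)
  show "(x, (f \<circ> \<alpha>inv) x) \<in> E"
    using E_trans[OF alpha_inv_E[THEN graph_on_E_apply, THEN conjunct2] fD(3)] x alpha_inv_in by simp
  show "(f \<circ> \<alpha>inv) x = \<alpha> ((f \<circ> \<alpha>inv) (\<alpha> x))"
    using compatible_involution_alpha_inv[OF f x] x by simp
qed

lemma compatible_involution_comp_funpow:
  assumes step: "\<And>h. compatible_involution h \<Longrightarrow> compatible_involution (h \<circ> g)"
    and f: "compatible_involution f"
  shows "compatible_involution (f \<circ> g ^^ n)"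
proof (induction n)
  case 0
  then show ?case using f by simp
next
  case (Suc n)
  have "f \<circ> g ^^ Suc n = (f \<circ> g ^^ n) \<circ> g"
    by (simp add: funpow_Suc_right o_assoc del: funpow.simps)
  then show ?case
    using step[OF Suc] by (simp only:)
qed

lemma compatible_involution_E_iff:
  assumes f: "compatible_involution f" and "x \<in> X" "y \<in> X"
  shows "(f (\<alpha> x), f y) \<in> E \<longleftrightarrow> (x, y) \<in> E"
proof -
  have fE: "graph_on X f \<subseteq> E"
    using f unfolding compatible_involution_def by blast
  show ?thesis
    using assms alpha_in
    by (simp add: graph_on_E_left_iff[OF fE] graph_on_E_right_iff[OF fE] graph_on_E_left_iff[OF alpha_E])
qed

lemma prime_op_eq:
  assumes f: "compatible_involution f"
  shows "prime_op X E \<alpha> f R = {(x, y). x \<in> X \<and> y \<in> X \<and> (f (\<alpha> x), f y) \<in> E - R}"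
proof -
  note fD = compatible_involutionD(1,2)[OF f]
  have "(x, y) \<in> prime_op X E \<alpha> f R \<longleftrightarrow> x \<in> X \<and> y \<in> X \<and> (f (\<alpha> x), f y) \<in> E - R" for x y
  proof
    assume "(x, y) \<in> prime_op X E \<alpha> f R"
    then obtain w where "x \<in> X" "(f (\<alpha> x), w) \<in> E - R" "w \<in> X" "y = f w"
      unfolding prime_op_def compl_E_def by auto
    then show "x \<in> X \<and> y \<in> X \<and> (f (\<alpha> x), f y) \<in> E - R"
      using fD by auto
  next
    assume xy: "x \<in> X \<and> y \<in> X \<and> (f (\<alpha> x), f y) \<in> E - R"
    then have "(x, \<alpha> x) \<in> graph_on X \<alpha>" "(\<alpha> x, f (\<alpha> x)) \<in> graph_on X f"
      "(f (\<alpha> x), f y) \<in> compl_E E R" "(f y, y) \<in> graph_on X f"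
      using fD alpha_in by (auto simp: compl_E_def)
    then show "(x, y) \<in> prime_op X E \<alpha> f R"
      unfolding prime_op_def by blast
  qed
  then show ?thesis
    by auto
qed

lemma prime_op_Up:
  assumes f: "compatible_involution f" and R: "R \<in> Up le E"
  shows "prime_op X E \<alpha> f R \<in> Up le E"
  unfolding prime_op_eq[OF f]
proof (rule UpI)
  show "{(x, y). x \<in> X \<and> y \<in> X \<and> (f (\<alpha> x), f y) \<in> E - R} \<subseteq> E"
    using compatible_involution_E_iff[OF f] by auto
next
  fix u v x y
  assume uv: "(u, v) \<in> {(x, y). x \<in> X \<and> y \<in> X \<and> (f (\<alpha> x), f y) \<in> E - R}"
    and xy: "(x, y) \<in> E" "(x, u) \<in> le" "(v, y) \<in> le"
  have X: "u \<in> X" "v \<in> X" "x \<in> X" "y \<in> X" and uv': "(f (\<alpha> u), f v) \<in> E" "(f (\<alpha> u), f v) \<notin> R"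
    using uv xy(1) E_in_X by auto
  have fle: "(a, b) \<in> le \<Longrightarrow> (f b, f a) \<in> le" for a b
    using f le_in_X unfolding compatible_involution_def dual_order_automorphism_def by blast
  have "(f (\<alpha> u), f (\<alpha> x)) \<in> le" "(f y, f v) \<in> le"
    using fle order_automorphism_mono[OF alpha] xy(2,3) by auto
  then have "(f (\<alpha> x), f y) \<notin> R"
    using UpD[OF R _ uv'(1)] uv'(2) by blast
  then show "(x, y) \<in> {(x, y). x \<in> X \<and> y \<in> X \<and> (f (\<alpha> x), f y) \<in> E - R}"
    using X xy(1) compatible_involution_E_iff[OF f] by simp
qed

lemma pullback_prime_op:
  assumes f: "compatible_involution f" and fg: "compatible_involution (f \<circ> g)"
    and g: "graph_on X g \<subseteq> E"
  shows "E \<inter> inv_image (prime_op X E \<alpha> f R) g = prime_op X E \<alpha> (f \<circ> g) R"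
proof -
  \<comment> \<open>No commutation hypothesis on \<open>g\<close> is needed: the compatibility of \<open>f\<close> and
    \<open>f \<circ> g\<close> gives \<open>f (\<alpha> (g x)) = \<alpha>inv (f (g x)) = f (g (\<alpha> x))\<close>.\<close>
  have commute: "f (\<alpha> (g x)) = f (g (\<alpha> x))" if "x \<in> X" for x
    using compatible_involution_alpha[OF f graph_on_E_apply[OF g that, THEN conjunct1]]
      compatible_involution_alpha[OF fg that] by simp
  have "(x, y) \<in> E \<inter> inv_image (prime_op X E \<alpha> f R) g \<longleftrightarrow> (x, y) \<in> prime_op X E \<alpha> (f \<circ> g) R"
    for x y
  proof
    assume "(x, y) \<in> E \<inter> inv_image (prime_op X E \<alpha> f R) g"
    then have xy: "(x, y) \<in> E" and P: "(f (\<alpha> (g x)), f (g y)) \<in> E - R"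
      by (simp_all add: prime_op_eq[OF f])
    then show "(x, y) \<in> prime_op X E \<alpha> (f \<circ> g) R"
      using E_in_X[OF xy] commute by (simp add: prime_op_eq[OF fg])
  next
    assume "(x, y) \<in> prime_op X E \<alpha> (f \<circ> g) R"
    then have X: "x \<in> X" "y \<in> X" and P: "(f (g (\<alpha> x)), f (g y)) \<in> E - R"
      by (simp_all add: prime_op_eq[OF fg])
    have "(x, y) \<in> E"
      using compatible_involution_E_iff[OF fg X] P by simp
    then show "(x, y) \<in> E \<inter> inv_image (prime_op X E \<alpha> f R) g"
      using P X commute graph_on_E_apply[OF g] by (simp add: prime_op_eq[OF f])
  qed
  then show ?thesis
    by (simp only: set_eq_iff split_paired_All) simp
qed

end

theorem proposition3p20:
  fixes X :: "'a set" and le E :: "'a rel" and \<alpha> \<beta> :: "'a \<Rightarrow> 'a" and n :: nat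
  assumes poset: "poset_on X le"
    and equivE: "equiv X E"
    and leE: "le \<subseteq> E"
    and alpha: "order_automorphism X le \<alpha>"
    and beta: "dual_order_automorphism X le \<beta>" "self_inverse X \<beta>"
    and alphaE: "graph_on X \<alpha> \<subseteq> E"
    and betaE: "graph_on X \<beta> \<subseteq> E"
    and beta_eq: "graph_on X \<beta> = graph_on X \<alpha> O graph_on X \<beta> O graph_on X \<alpha>"
  shows "\<exists>\<beta>d \<beta>u :: 'a \<Rightarrow> 'a.
           dual_order_automorphism X le \<beta>d \<and> self_inverse X \<beta>d \<and>
           dual_order_automorphism X le \<beta>u \<and> self_inverse X \<beta>u \<and>
           graph_on X \<beta>d \<subseteq> E \<and> graph_on X \<beta>u \<subseteq> E \<and>
           graph_on X \<beta>d = graph_on X \<alpha> O graph_on X \<beta>d O graph_on X \<alpha> \<and>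
           graph_on X \<beta>u = graph_on X \<alpha> O graph_on X \<beta>u O graph_on X \<alpha> \<and>
           (\<forall>R \<in> Up le E.
              (tneg X le E \<alpha> ^^ (2 * n)) (prime_op X E \<alpha> \<beta> R)
                = graph_on X \<alpha> O graph_on X \<beta>d O compl_E E R O graph_on X \<beta>d \<and>
              (mneg X le E \<alpha> ^^ (2 * n)) (prime_op X E \<alpha> \<beta> R)
                = graph_on X \<alpha> O graph_on X \<beta>u O compl_E E R O graph_on X \<beta>u)"
proof -
  interpret Dq_frame X le E \<alpha>
    using poset equivE alpha alphaE by unfold_locales
  have \<beta>: "compatible_involution \<beta>"
    using beta betaE beta_eq unfolding compatible_involution_def by blast
  have \<beta>d: "compatible_involution (\<beta> \<circ> \<alpha>inv ^^ n)"
    by (rule compatible_involution_comp_funpow[OF compatible_involution_comp_alpha_inv \<beta>])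
  have \<beta>u: "compatible_involution (\<beta> \<circ> \<alpha> ^^ n)"
    by (rule compatible_involution_comp_funpow[OF compatible_involution_comp_alpha \<beta>])
  have tneg_eq: "(tneg X le E \<alpha> ^^ (2 * n)) (prime_op X E \<alpha> \<beta> R) = prime_op X E \<alpha> (\<beta> \<circ> \<alpha>inv ^^ n) R"
    if R: "R \<in> Up le E" for R
    using funpow_tneg[OF prime_op_Up[OF \<beta> R]] pullback_prime_op[OF \<beta> \<beta>d graph_on_funpow_E[OF alpha_inv_E]]
    by simp
  have mneg_eq: "(mneg X le E \<alpha> ^^ (2 * n)) (prime_op X E \<alpha> \<beta> R) = prime_op X E \<alpha> (\<beta> \<circ> \<alpha> ^^ n) R"
    if R: "R \<in> Up le E" for R
    using funpow_mneg[OF prime_op_Up[OF \<beta> R]] pullback_prime_op[OF \<beta> \<beta>u graph_on_funpow_E[OF alphaE]]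
    by simp
  show ?thesis
    unfolding prime_op_def[symmetric]
    using \<beta>d \<beta>u tneg_eq mneg_eq unfolding compatible_involution_def
    by (intro exI[of _ "\<beta> \<circ> \<alpha>inv ^^ n"] exI[of _ "\<beta> \<circ> \<alpha> ^^ n"] conjI ballI) (simp_all only:)
qed

end
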